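(* For the two-state-service-rate queue described in the context, assumed positive recurrent and with $\gamma>0$, one has $$\lim_{n\to\infty}\frac{\pi_n^a}{\pi_n^b}=\eta:=\frac{1}{2\lambda}\Bigl(\sqrt{\Delta}+\gamma-\lambda+\mu_b-\mu_a\Bigr),\qquad \Delta=(\lambda-\gamma+\mu_a-\mu_b)^2+4\lambda\gamma,$$ and consequently the effective service rate $\frac{\mu_a\pi_n^a+\mu_b\pi_n^b}{\pi_n}$ converges as $n\to\infty$ to $\mu^\infty=\mu_b+\frac{\eta}{1+\eta}(\mu_a-\mu_b)$.
   Context: Two-state-service-rate queue. Fix parameters $\lambda_a,\lambda_b>0$, $\delta>0$, $\gamma\ge0$, $\mu_a,\mu_b>0$. Set $\lambda=\lambda_a+\lambda_b$, $r=\lambda/(\lambda+\delta)$, and for $n\ge1$, $p_n=\frac{\lambda_a}{\lambda}r^n$ and $\bar p_n=1-p_n$. Consider the continuous-time Markov chain on the state space $\{0\}\cup\{(n,a),(n,b):n\ge1\}$ with the following transitions: from $0$ to $(1,a)$ at rate $\lambda_a$ and to $(1,b)$ at rate $\lambda_b$; for $n\ge1$ and $c\in\{a,b\}$, from $(n,c)$ to $(n+1,c)$ at rate $\lambda$; from $(1,c)$ to $0$ at rate $\mu_c$; for $n\ge1$ and $c\in\{a,b\}$, from $(n+1,c)$ to $(n,a)$ at rate $\mu_c p_n$ and to $(n,b)$ at rate $\mu_c\bar p_n$; for $n\ge1$, from $(n,b)$ to $(n,a)$ at rate $\gamma$. When the chain is positive recurrent, $\pi$ denotes its stationary distribution and $\pi_0=\pi(0)$,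 $\pi_n^a=\pi((n,a))$, $\pi_n^b=\pi((n,b))$, $\pi_n=\pi_n^a+\pi_n^b$ for $n\ge1$. *)

theory Defs
  imports "HOL-Analysis.Analysis"
begin

text \<open>States of the two-state-service-rate queue: Empty is state 0,
  QA n is (n,a), QB n is (n,b).  Only n >= 1 are genuine states;
  QA 0 and QB 0 are dummies lying outside the state space.\<close>
datatype qstate = Empty | QA nat | QB nat

definition qspace :: "qstate set" where
  "qspace = {Empty} \<union> {QA n | n. n \<ge> 1} \<union> {QB n | n. n \<ge> 1}"

definition r_par :: "real \<Rightarrow> real \<Rightarrow> real \<Rightarrow> real" where
  "r_par la lb d = (la + lb) / (la + lb + d)"

definition p_par :: "real \<Rightarrow> real \<Rightarrow> real \<Rightarrow> nat \<Rightarrow> real" where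
  "p_par la lb d n = la / (la + lb) * r_par la lb d ^ n"

definition qrate :: "real \<Rightarrow> real \<Rightarrow> real \<Rightarrow> real \<Rightarrow> real \<Rightarrow> real \<Rightarrow>
    qstate \<Rightarrow> qstate \<Rightarrow> real" where
  "qrate la lb d g ma mb s t =
    (case s of
       Empty \<Rightarrow> (if t = QA 1 then la else 0) + (if t = QB 1 then lb else 0)
     | QA n \<Rightarrow> (if n = 0 then 0 else
          (if t = QA (n + 1) then la + lb else 0)
        + (if n = 1 \<and> t = Empty then ma else 0)
        + (if n \<ge> 2 \<and> t = QA (n - 1) then ma * p_par la lb d (n - 1) else 0)
        + (if n \<ge> 2 \<and> t = QB (n - 1) then ma * (1 - p_par la lb d (n - 1)) else 0))
     | QB n \<Rightarrow> (if n = 0 then 0 else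
          (if t = QB (n + 1) then la + lb else 0)
        + (if n = 1 \<and> t = Empty then mb else 0)
        + (if n \<ge> 2 \<and> t = QA (n - 1) then mb * p_par la lb d (n - 1) else 0)
        + (if n \<ge> 2 \<and> t = QB (n - 1) then mb * (1 - p_par la lb d (n - 1)) else 0)
        + (if t = QA n then g else 0)))"

definition stationary_dist :: "('s \<Rightarrow> 's \<Rightarrow> real) \<Rightarrow> 's set \<Rightarrow> ('s \<Rightarrow> real) \<Rightarrow> bool" where
  "stationary_dist q S \<pi> \<longleftrightarrow>
     (\<forall>s. 0 \<le> \<pi> s) \<and> (\<forall>s. s \<notin> S \<longrightarrow> \<pi> s = 0) \<and> (\<pi> has_sum 1) S \<and>
     (\<forall>t\<in>S. \<pi> t * (\<Sum>\<^sub>\<infinity>s\<in>S - {t}. q t s) = (\<Sum>\<^sub>\<infinity>s\<in>S - {t}. \<pi> s * q s t))"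

end

theory Submission
  imports Defs
begin

(* Write x_n = pi_n^a, y_n = pi_n^b, lam = la + lb.  Summing the balance
   equations of levels 0..n gives the level-crossing identity
   ma x_(n+1) + mb y_(n+1) = lam (x_n + y_n); substituting it back into the
   balance equations of level n >= 2 yields a linear recurrence in (x_n, y_n)
   whose coefficients differ from constant ones only by the routing
   probability p_n -> 0.  For the two roots eta > 0 > eta' of the
   characteristic equation lam z^2 + (lam + ma - mb - g) z = g, the
   combinations x_n - eta y_n and x_n - eta' y_n obey scalar recurrences with
   damping factors lam + ma + eta lam > lam + ma + eta' lam > 0, so their
   ratio tends to 0, and therefore x_n / y_n -> eta.  The effective service
   rate is a continuous function of this ratio. *)

lemma infsum_finite_support:
  fixes f :: "'a \<Rightarrow> 'b::{comm_monoid_add, t2_space}"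
  assumes "finite F" "F \<subseteq> A" "\<And>x. x \<in> A - F \<Longrightarrow> f x = 0"
  shows "infsum f A = sum f F"
proof -
  have "infsum f A = infsum f F"
    by (rule infsum_cong_neutral) (use assms in auto)
  with \<open>finite F\<close> show ?thesis by simp
qed

lemma contraction_tendsto_zero:
  fixes t e :: "nat \<Rightarrow> real"
  assumes K: "0 \<le> K" "K < 1"
    and step: "\<And>n. \<bar>t (Suc n)\<bar> \<le> K * \<bar>t n\<bar> + e (Suc n)"
    and e: "e \<longlonglongrightarrow> 0"
  shows "t \<longlonglongrightarrow> 0"
proof (rule LIMSEQ_I)
  fix r :: real assume "0 < r"
  then have "0 < r * (1 - K) / 2" using K by simp
  with e obtain M where M: "\<And>n. n \<ge> M \<Longrightarrow> \<bar>e n\<bar> < r * (1 - K) / 2"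
    using LIMSEQ_D by fastforce
  have tail: "\<bar>t (M + k)\<bar> \<le> K ^ k * \<bar>t M\<bar> + r / 2" for k
  proof (induction k)
    case 0
    then show ?case using \<open>0 < r\<close> by simp
  next
    case (Suc k)
    have "\<bar>t (M + Suc k)\<bar> \<le> K * \<bar>t (M + k)\<bar> + e (Suc (M + k))"
      using step[of "M + k"] by simp
    also have "\<dots> \<le> K * (K ^ k * \<bar>t M\<bar> + r / 2) + r * (1 - K) / 2"
      using mult_left_mono[OF Suc.IH K(1)] M[of "Suc (M + k)"] by linarith
    also have "\<dots> = K ^ Suc k * \<bar>t M\<bar> + r / 2"
      by (simp add: field_simps)
    finally show ?case .
  qed
  have "(\<lambda>k. K ^ k * \<bar>t M\<bar>) \<longlonglongrightarrow> 0"
    using LIMSEQ_power_zero[of K] K by (intro tendsto_mult_left_zero) simp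
  with \<open>0 < r\<close> obtain k0 where k0: "\<And>k. k \<ge> k0 \<Longrightarrow> K ^ k * \<bar>t M\<bar> < r / 2"
    using LIMSEQ_D[of _ 0 "r / 2"] by fastforce
  show "\<exists>n0. \<forall>n\<ge>n0. norm (t n - 0) < r"
  proof (intro exI allI impI)
    fix n assume "n \<ge> M + k0"
    then have "n = M + (n - M)" "n - M \<ge> k0" by auto
    then show "norm (t n - 0) < r"
      using tail[of "n - M"] k0[of "n - M"] by simp
  qed
qed

lemma ratio_error_step:
  fixes s s' c P Q m M a b ea ha eb hb :: real
  assumes "0 < s" "0 \<le> s'" "0 < m" "0 < Q" "0 \<le> P" "ha \<noteq> 0" "m * Q \<le> hb"
    and t_bound: "\<bar>ea / ha\<bar> \<le> M"
    and rec_e: "s * eb = c * ea + P * Q * a"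
    and rec_h: "s' * hb = c * ha + P * Q * b"
  shows "\<bar>eb / hb\<bar> \<le> s' / s * \<bar>ea / ha\<bar> + P * ((\<bar>a\<bar> + \<bar>b\<bar> * M) / (s * m))"
proof -
  define t where "t = ea / ha"
  have "0 < m * Q" using assms by simp
  then have hb: "0 < hb" using assms by linarith
  have "s * eb = t * s' * hb + P * Q * (a - b * t)"
    using rec_e rec_h \<open>ha \<noteq> 0\<close> by (simp add: t_def field_simps)
  then have split: "eb / hb = s' / s * t + P * (Q / hb) * (a - b * t) / s"
    using hb \<open>0 < s\<close> by (simp add: field_simps)
  have "\<bar>a - b * t\<bar> \<le> \<bar>a\<bar> + \<bar>b\<bar> * \<bar>t\<bar>"
    by (metis abs_mult abs_triangle_ineq4)
  also have "\<dots> \<le> \<bar>a\<bar> + \<bar>b\<bar> * M"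
    using mult_left_mono[OF t_bound[folded t_def] abs_ge_zero[of b]] by simp
  finally have "\<bar>a - b * t\<bar> \<le> \<bar>a\<bar> + \<bar>b\<bar> * M" .
  moreover have "0 \<le> Q / hb" "Q / hb \<le> 1 / m"
    using hb assms by (simp_all add: field_simps)
  ultimately have "P * (Q / hb) * \<bar>a - b * t\<bar> \<le> P * (1 / m) * (\<bar>a\<bar> + \<bar>b\<bar> * M)"
    using \<open>0 \<le> P\<close> \<open>0 < m\<close> by (intro mult_mono mult_left_mono) auto
  then have "P * (Q / hb) * \<bar>a - b * t\<bar> / s \<le> P * (1 / m) * (\<bar>a\<bar> + \<bar>b\<bar> * M) / s"
    using \<open>0 < s\<close> by (rule divide_right_mono[OF _ less_imp_le])
  moreover have "\<bar>P * (Q / hb) * (a - b * t) / s\<bar> = P * (Q / hb) * \<bar>a - b * t\<bar> / s"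
    using assms hb by (simp add: abs_mult)
  ultimately have err: "\<bar>P * (Q / hb) * (a - b * t) / s\<bar> \<le> P * ((\<bar>a\<bar> + \<bar>b\<bar> * M) / (s * m))"
    by (simp add: ac_simps)
  have "\<bar>s' / s * t\<bar> = s' / s * \<bar>ea / ha\<bar>"
    using assms by (simp add: abs_mult t_def)
  then show ?thesis
    unfolding split using abs_triangle_ineq[of "s' / s * t"] err by linarith
qed

lemma characteristic_roots:
  fixes lam g ma mb :: real
  assumes "0 < lam" "0 < g" "0 < ma" "0 < mb"
  defines "Delta \<equiv> (lam - g + ma - mb)^2 + 4 * lam * g"
  defines "eta \<equiv> (sqrt Delta + g - lam + mb - ma) / (2 * lam)"
    and "eta' \<equiv> (- sqrt Delta + g - lam + mb - ma) / (2 * lam)"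
  shows "eta' < 0" "0 < eta" "0 < lam + ma + eta' * lam"
    and "g + eta * (mb + g) = eta * (lam + ma + eta * lam)"
    and "g + eta' * (mb + g) = eta' * (lam + ma + eta' * lam)"
proof -
  define B where "B = lam + ma - mb - g"
  define S where "S = sqrt Delta"
  have Delta: "Delta = B^2 + 4 * lam * g"
    unfolding Delta_def B_def by (simp add: algebra_simps power2_eq_square)
  have "0 < 4 * lam * g" using assms by simp
  then have S2: "S^2 = B^2 + 4 * lam * g" and B_S: "\<bar>B\<bar> < S"
    using Delta by (simp_all add: S_def real_less_rsqrt add_nonneg_pos)
  have eta: "2 * lam * eta = S - B" and eta': "2 * lam * eta' = - S - B"
    using \<open>0 < lam\<close> by (simp_all add: eta_def eta'_def S_def B_def field_simps)
  have root: "g + z * (mb + g) = z * (lam + ma + z * lam)" if "(2 * lam * z + B)^2 = S^2" for z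
  proof -
    have "4 * lam * (lam * z^2 + B * z - g) = (2 * lam * z + B)^2 - S^2"
      using S2 by (simp add: algebra_simps power2_eq_square)
    with that \<open>0 < lam\<close> have "lam * z^2 + B * z - g = 0" by simp
    then show ?thesis unfolding B_def by algebra
  qed
  have "2 * lam * eta' < 0" "0 < 2 * lam * eta"
    using eta eta' B_S by (simp_all add: abs_less_iff)
  then show "eta' < 0" "0 < eta"
    using \<open>0 < lam\<close> by (simp_all add: mult_less_0_iff zero_less_mult_iff)
  show "g + eta * (mb + g) = eta * (lam + ma + eta * lam)"
    by (rule root) (simp add: eta)
  show "g + eta' * (mb + g) = eta' * (lam + ma + eta' * lam)"
    by (rule root) (simp add: eta')
  define T where "T = lam + ma + mb + g"
  have "T^2 - S^2 = 4 * (lam * mb + ma * mb + ma * g)"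
    using S2 by (simp add: T_def B_def algebra_simps power2_eq_square)
  moreover have "0 < lam * mb + ma * mb + ma * g" using assms by (simp add: add_pos_pos)
  moreover have "0 < T" using assms by (simp add: T_def)
  ultimately have "S^2 < T^2" by simp
  with \<open>0 < T\<close> have "S < T"
    by (simp add: power_less_imp_less_base)
  moreover have "2 * (lam + ma + eta' * lam) = T - S"
    using eta' by (simp add: T_def B_def algebra_simps)
  ultimately show "0 < lam + ma + eta' * lam" by simp
qed

lemma eigen_combination:
  fixes lam ma mb g P xa ya xb yb z :: real
  assumes "(lam + ma) * xb = lam * xa + P * lam * (xb + yb) + g * yb"
    and "(lam + mb + g) * yb = lam * ya + (1 - P) * lam * (xb + yb)"
    and "g + z * (mb + g) = z * (lam + ma + z * lam)"
  shows "(lam + ma + z * lam) * (xb - z * yb) = lam * (xa - z * ya) + P * (xb + yb) * (lam * (1 + z))"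
  using assms by algebra

(* Core estimate: for the perturbed recurrence with perturbation p -> 0, the
   ratio of the two eigen-combinations x - eta y and x - eta' y tends to 0,
   because the first one is damped by lam + ma + eta lam and the second only by
   the strictly smaller lam + ma + eta' lam. *)
lemma error_ratio_tendsto_zero:
  fixes lam ma mb g eta eta' :: real and x y p :: "nat \<Rightarrow> real"
  assumes "0 < lam" "eta' < 0" "0 < eta" "0 < lam + ma + eta' * lam"
    and root: "g + eta * (mb + g) = eta * (lam + ma + eta * lam)"
    and root': "g + eta' * (mb + g) = eta' * (lam + ma + eta' * lam)"
    and x: "\<And>n. 0 < x n" and y: "\<And>n. 0 \<le> y n"
    and p: "\<And>n. 0 \<le> p n" "p \<longlonglongrightarrow> 0"
    and rec_a: "\<And>n. (lam + ma) * x (Suc n)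
                  = lam * x n + p (Suc n) * lam * (x (Suc n) + y (Suc n)) + g * y (Suc n)"
    and rec_b: "\<And>n. (lam + mb + g) * y (Suc n)
                  = lam * y n + (1 - p (Suc n)) * lam * (x (Suc n) + y (Suc n))"
  shows "(\<lambda>n. (x n - eta * y n) / (x n - eta' * y n)) \<longlonglongrightarrow> 0"
proof -
  define s s' where "s = lam + ma + eta * lam" and "s' = lam + ma + eta' * lam"
  define m where "m = min 1 (- eta')"
  define M where "M = max 1 eta / m"
  define C where "C = (\<bar>lam * (1 + eta)\<bar> + \<bar>lam * (1 + eta')\<bar> * M) / (s * m)"
  define t where "t n = (x n - eta * y n) / (x n - eta' * y n)" for n
  have "0 < m" using \<open>eta' < 0\<close> by (simp add: m_def)
  have s: "0 < s'" "s' < s"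
    using assms mult_strict_right_mono[of eta' eta lam] by (simp_all add: s_def s'_def)
  have h_lower: "m * (x n + y n) \<le> x n - eta' * y n" for n
  proof -
    have "m * x n \<le> 1 * x n" "m * y n \<le> (- eta') * y n"
      using x[of n] y[of n] by (intro mult_right_mono; simp add: m_def)+
    then show ?thesis by (simp add: algebra_simps)
  qed
  have h_pos: "0 < x n - eta' * y n" for n
    using h_lower[of n] \<open>0 < m\<close> x[of n] y[of n]
    by (smt (verit) mult_pos_pos)
  have t_bound: "\<bar>t n\<bar> \<le> M" for n
  proof -
    have "1 * x n \<le> max 1 eta * x n" "eta * y n \<le> max 1 eta * y n"
      using x[of n] y[of n] by (intro mult_right_mono; simp)+
    moreover have "0 \<le> eta * y n" using y[of n] \<open>0 < eta\<close> by simp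
    ultimately have "\<bar>x n - eta * y n\<bar> \<le> max 1 eta * (x n + y n)"
      using x[of n] unfolding abs_le_iff distrib_left by linarith
    also have "\<dots> = M * (m * (x n + y n))" using \<open>0 < m\<close> by (simp add: M_def)
    also have "\<dots> \<le> M * (x n - eta' * y n)"
      using h_lower \<open>0 < m\<close> by (intro mult_left_mono) (simp_all add: M_def)
    finally show ?thesis
      using h_pos[of n] by (simp add: t_def abs_divide pos_divide_le_eq)
  qed
  have step: "\<bar>t (Suc n)\<bar> \<le> s' / s * \<bar>t n\<bar> + p (Suc n) * C" for n
    unfolding t_def C_def
  proof (rule ratio_error_step)
    show "s * (x (Suc n) - eta * y (Suc n))
          = lam * (x n - eta * y n) + p (Suc n) * (x (Suc n) + y (Suc n)) * (lam * (1 + eta))"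
      unfolding s_def by (rule eigen_combination[OF rec_a rec_b root])
    show "s' * (x (Suc n) - eta' * y (Suc n))
          = lam * (x n - eta' * y n) + p (Suc n) * (x (Suc n) + y (Suc n)) * (lam * (1 + eta'))"
      unfolding s'_def by (rule eigen_combination[OF rec_a rec_b root'])
    show "0 < x (Suc n) + y (Suc n)" using x y by (simp add: add_pos_nonneg)
    show "x n - eta' * y n \<noteq> 0" using h_pos[of n] by simp
    show "\<bar>(x n - eta * y n) / (x n - eta' * y n)\<bar> \<le> M" using t_bound[of n] by (simp add: t_def)
  qed (use s \<open>0 < m\<close> p h_lower in simp_all)
  have "t \<longlonglongrightarrow> 0"
  proof (rule contraction_tendsto_zero)
    show "0 \<le> s' / s" "s' / s < 1" using s by simp_all
    show "\<bar>t (Suc n)\<bar> \<le> s' / s * \<bar>t n\<bar> + p (Suc n) * C" for n by (rule step)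
    show "(\<lambda>n. p n * C) \<longlonglongrightarrow> 0" by (rule tendsto_mult_left_zero[OF p(2)])
  qed
  then show ?thesis by (simp only: t_def[abs_def])
qed

lemma ratio_limit_from_error:
  fixes x y :: "nat \<Rightarrow> real" and eta eta' :: real
  assumes x: "\<And>n. 0 < x n" and y: "\<And>n. 0 \<le> y n" and "eta' \<le> 0"
    and err: "(\<lambda>n. (x n - eta * y n) / (x n - eta' * y n)) \<longlonglongrightarrow> 0"
  shows "(\<lambda>n. x n / y n) \<longlonglongrightarrow> eta"
proof -
  define t where "t n = (x n - eta * y n) / (x n - eta' * y n)" for n
  have h_pos: "0 < x n - eta' * y n" for n
    using x[of n] mult_nonpos_nonneg[OF \<open>eta' \<le> 0\<close> y[of n]] by linarith
  have "eventually (\<lambda>n. \<bar>t n\<bar> < 1) sequentially"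
    using err unfolding t_def[abs_def] by (rule order_tendstoD(2)[OF tendsto_rabs_zero]) simp
  then have "eventually (\<lambda>n. x n / y n = (eta - eta' * t n) / (1 - t n)) sequentially"
  proof (rule eventually_mono)
    fix n assume "\<bar>t n\<bar> < 1"
    have "x n - eta * y n = t n * (x n - eta' * y n)"
      using h_pos[of n] by (simp add: t_def)
    then have cross: "x n * (1 - t n) = y n * (eta - eta' * t n)"
      by (simp add: algebra_simps)
    have "0 < x n * (1 - t n)" using x[of n] \<open>\<bar>t n\<bar> < 1\<close> by simp
    with cross have "y n \<noteq> 0" by auto
    with cross \<open>\<bar>t n\<bar> < 1\<close> show "x n / y n = (eta - eta' * t n) / (1 - t n)"
      by (simp add: field_simps)
  qed
  moreover have "(\<lambda>n. (eta - eta' * t n) / (1 - t n)) \<longlonglongrightarrow> (eta - eta' * 0) / (1 - 0)"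
    using err unfolding t_def[abs_def] by (intro tendsto_intros) simp_all
  ultimately show ?thesis
    by (simp add: tendsto_cong)
qed

lemma perturbed_recurrence_ratio_limit:
  fixes lam g ma mb :: real and x y p :: "nat \<Rightarrow> real"
  assumes params: "0 < lam" "0 < g" "0 < ma" "0 < mb"
    and x: "\<And>n. 0 < x n" and y: "\<And>n. 0 \<le> y n"
    and p: "\<And>n. 0 \<le> p n" "p \<longlonglongrightarrow> 0"
    and rec_a: "\<And>n. (lam + ma) * x (Suc n)
                  = lam * x n + p (Suc n) * lam * (x (Suc n) + y (Suc n)) + g * y (Suc n)"
    and rec_b: "\<And>n. (lam + mb + g) * y (Suc n)
                  = lam * y n + (1 - p (Suc n)) * lam * (x (Suc n) + y (Suc n))"
  defines "Delta \<equiv> (lam - g + ma - mb)^2 + 4 * lam * g"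
  defines "eta \<equiv> (sqrt Delta + g - lam + mb - ma) / (2 * lam)"
  shows "(\<lambda>n. x n / y n) \<longlonglongrightarrow> eta" and "0 < eta"
proof -
  define eta' where "eta' = (- sqrt Delta + g - lam + mb - ma) / (2 * lam)"
  note roots = characteristic_roots[OF params, folded Delta_def, folded eta_def eta'_def]
  show "0 < eta" by (fact roots(2))
  have "(\<lambda>n. (x n - eta * y n) / (x n - eta' * y n)) \<longlonglongrightarrow> 0"
    using \<open>0 < lam\<close> roots x y p rec_a rec_b by (rule error_ratio_tendsto_zero)
  with x y show "(\<lambda>n. x n / y n) \<longlonglongrightarrow> eta"
    using roots(1) by (intro ratio_limit_from_error[of x y eta']) simp_all
qed

lemma weighted_average_limit:
  fixes x y :: "nat \<Rightarrow> real" and eta a b :: real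
  assumes lim: "(\<lambda>n. x n / y n) \<longlonglongrightarrow> eta" and "eta \<noteq> 0" "1 + eta \<noteq> 0"
  shows "(\<lambda>n. (a * x n + b * y n) / (x n + y n)) \<longlonglongrightarrow> b + eta / (1 + eta) * (a - b)"
proof -
  have lim1: "(\<lambda>n. x n / y n + 1) \<longlonglongrightarrow> eta + 1"
    using lim by (intro tendsto_intros)
  have "eventually (\<lambda>n. x n / y n \<noteq> 0) sequentially"
    using lim \<open>eta \<noteq> 0\<close> by (rule tendsto_imp_eventually_ne)
  moreover have "eventually (\<lambda>n. x n / y n + 1 \<noteq> 0) sequentially"
    using \<open>1 + eta \<noteq> 0\<close> by (intro tendsto_imp_eventually_ne[OF lim1]) (simp add: add.commute)
  ultimately have "eventually (\<lambda>n. (a * (x n / y n) + b) / (x n / y n + 1)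
                            = (a * x n + b * y n) / (x n + y n)) sequentially"
  proof (rule eventually_elim2)
    fix n assume "x n / y n \<noteq> 0" "x n / y n + 1 \<noteq> 0"
    then have "y n \<noteq> 0" by auto
    then have "a * (x n / y n) + b = (a * x n + b * y n) / y n" "x n / y n + 1 = (x n + y n) / y n"
      by (simp_all add: field_simps)
    with \<open>y n \<noteq> 0\<close> show "(a * (x n / y n) + b) / (x n / y n + 1) = (a * x n + b * y n) / (x n + y n)"
      by simp
  qed
  moreover have "(\<lambda>n. (a * (x n / y n) + b) / (x n / y n + 1)) \<longlonglongrightarrow> (a * eta + b) / (eta + 1)"
    using lim lim1 \<open>1 + eta \<noteq> 0\<close> by (intro tendsto_divide tendsto_intros) (simp_all add: add.commute)
  moreover have "(a * eta + b) / (eta + 1) = b + eta / (1 + eta) * (a - b)"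
    using \<open>1 + eta \<noteq> 0\<close> by (simp add: field_simps add.commute)
  ultimately show ?thesis
    using Lim_transform_eventually by fastforce
qed

lemma mem_qspace [simp]:
  "Empty \<in> qspace" "QA n \<in> qspace \<longleftrightarrow> 1 \<le> n" "QB n \<in> qspace \<longleftrightarrow> 1 \<le> n"
  by (auto simp: qspace_def)

lemma p_par_nonneg: "0 \<le> la \<Longrightarrow> 0 \<le> lb \<Longrightarrow> 0 \<le> d \<Longrightarrow> 0 \<le> p_par la lb d n"
  by (simp add: p_par_def r_par_def)

lemma p_par_tendsto_zero:
  assumes "0 < la + lb" "0 < d"
  shows "p_par la lb d \<longlonglongrightarrow> 0"
proof -
  have "0 \<le> r_par la lb d" "r_par la lb d < 1"
    using assms by (simp_all add: r_par_def)
  then have "(\<lambda>n. la / (la + lb) * r_par la lb d ^ n) \<longlonglongrightarrow> 0"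
    by (intro tendsto_mult_right_zero LIMSEQ_power_zero) simp
  then show ?thesis by (simp add: p_par_def[abs_def])
qed

definition level_mass :: "(qstate \<Rightarrow> real) \<Rightarrow> nat \<Rightarrow> real" where
  "level_mass \<pi> n = (if n = 0 then \<pi> Empty else \<pi> (QA n) + \<pi> (QB n))"

context
  fixes la lb d g ma mb :: real and \<pi> :: "qstate \<Rightarrow> real"
  assumes stationary: "stationary_dist (qrate la lb d g ma mb) qspace \<pi>"
begin

lemma global_balance:
  "t \<in> qspace \<Longrightarrow>
    \<pi> t * (\<Sum>\<^sub>\<infinity>s\<in>qspace - {t}. qrate la lb d g ma mb t s)
      = (\<Sum>\<^sub>\<infinity>s\<in>qspace - {t}. \<pi> s * qrate la lb d g ma mb s t)"
  using stationary by (simp add: stationary_dist_def)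

lemma balance_Empty: "(la + lb) * \<pi> Empty = ma * \<pi> (QA 1) + mb * \<pi> (QB 1)"
proof -
  have "(\<Sum>\<^sub>\<infinity>s\<in>qspace - {Empty}. qrate la lb d g ma mb Empty s) = la + lb"
    by (subst infsum_finite_support[where F = "{QA 1, QB 1}"]) (auto simp: qrate_def)
  moreover have "(\<Sum>\<^sub>\<infinity>s\<in>qspace - {Empty}. \<pi> s * qrate la lb d g ma mb s Empty)
      = \<pi> (QA 1) * ma + \<pi> (QB 1) * mb"
    by (subst infsum_finite_support[where F = "{QA 1, QB 1}"])
       (auto simp: qrate_def split: qstate.splits)
  ultimately show ?thesis
    using global_balance[of Empty] by (simp add: algebra_simps)
qed

lemma balance_QA_1:
  "(la + lb + ma) * \<pi> (QA 1)
    = la * \<pi> Empty + p_par la lb d 1 * (ma * \<pi> (QA 2) + mb * \<pi> (QB 2)) + g * \<pi> (QB 1)"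
proof -
  have "(\<Sum>\<^sub>\<infinity>s\<in>qspace - {QA 1}. qrate la lb d g ma mb (QA 1) s) = la + lb + ma"
    by (subst infsum_finite_support[where F = "{QA 2, Empty}"])
       (auto simp: qrate_def split: qstate.splits)
  moreover have "(\<Sum>\<^sub>\<infinity>s\<in>qspace - {QA 1}. \<pi> s * qrate la lb d g ma mb s (QA 1))
      = \<pi> Empty * la + \<pi> (QA 2) * (ma * p_par la lb d 1) + \<pi> (QB 2) * (mb * p_par la lb d 1)
        + \<pi> (QB 1) * g"
    by (subst infsum_finite_support[where F = "{Empty, QA 2, QB 2, QB 1}"])
       (auto simp: qrate_def split: qstate.splits)
  ultimately show ?thesis
    using global_balance[of "QA 1"] by (simp add: algebra_simps)
qed

lemma balance_QB_1:
  "(la + lb + mb + g) * \<pi> (QB 1)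
    = lb * \<pi> Empty + (1 - p_par la lb d 1) * (ma * \<pi> (QA 2) + mb * \<pi> (QB 2))"
proof -
  have "(\<Sum>\<^sub>\<infinity>s\<in>qspace - {QB 1}. qrate la lb d g ma mb (QB 1) s) = la + lb + mb + g"
    by (subst infsum_finite_support[where F = "{QB 2, Empty, QA 1}"])
       (auto simp: qrate_def split: qstate.splits)
  moreover have "(\<Sum>\<^sub>\<infinity>s\<in>qspace - {QB 1}. \<pi> s * qrate la lb d g ma mb s (QB 1))
      = \<pi> Empty * lb + \<pi> (QA 2) * (ma * (1 - p_par la lb d 1)) + \<pi> (QB 2) * (mb * (1 - p_par la lb d 1))"
    by (subst infsum_finite_support[where F = "{Empty, QA 2, QB 2}"])
       (auto simp: qrate_def split: qstate.splits)
  ultimately show ?thesis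
    using global_balance[of "QB 1"] by (simp add: algebra_simps)
qed

lemma balance_QA:
  assumes "2 \<le> k"
  shows "(la + lb + ma) * \<pi> (QA k)
    = (la + lb) * \<pi> (QA (k - 1)) + p_par la lb d k * (ma * \<pi> (QA (k + 1)) + mb * \<pi> (QB (k + 1)))
      + g * \<pi> (QB k)"
proof -
  have "(\<Sum>\<^sub>\<infinity>s\<in>qspace - {QA k}. qrate la lb d g ma mb (QA k) s) = la + lb + ma"
    by (subst infsum_finite_support[where F = "{QA (k + 1), QA (k - 1), QB (k - 1)}"])
       (use assms in \<open>auto simp: qrate_def algebra_simps split: qstate.splits\<close>)
  moreover have "(\<Sum>\<^sub>\<infinity>s\<in>qspace - {QA k}. \<pi> s * qrate la lb d g ma mb s (QA k))
      = \<pi> (QA (k - 1)) * (la + lb) + \<pi> (QA (k + 1)) * (ma * p_par la lb d k)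
        + \<pi> (QB (k + 1)) * (mb * p_par la lb d k) + \<pi> (QB k) * g"
    by (subst infsum_finite_support[where F = "{QA (k - 1), QA (k + 1), QB (k + 1), QB k}"])
       (use assms in \<open>auto simp: qrate_def split: qstate.splits\<close>)
  ultimately show ?thesis
    using global_balance[of "QA k"] assms by (simp add: algebra_simps)
qed

lemma balance_QB:
  assumes "2 \<le> k"
  shows "(la + lb + mb + g) * \<pi> (QB k)
    = (la + lb) * \<pi> (QB (k - 1))
      + (1 - p_par la lb d k) * (ma * \<pi> (QA (k + 1)) + mb * \<pi> (QB (k + 1)))"
proof -
  have "(\<Sum>\<^sub>\<infinity>s\<in>qspace - {QB k}. qrate la lb d g ma mb (QB k) s) = la + lb + mb + g"
    by (subst infsum_finite_support[where F = "{QB (k + 1), QA (k - 1), QB (k - 1), QA k}"])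
       (use assms in \<open>auto simp: qrate_def algebra_simps split: qstate.splits\<close>)
  moreover have "(\<Sum>\<^sub>\<infinity>s\<in>qspace - {QB k}. \<pi> s * qrate la lb d g ma mb s (QB k))
      = \<pi> (QB (k - 1)) * (la + lb) + \<pi> (QA (k + 1)) * (ma * (1 - p_par la lb d k))
        + \<pi> (QB (k + 1)) * (mb * (1 - p_par la lb d k))"
    by (subst infsum_finite_support[where F = "{QB (k - 1), QA (k + 1), QB (k + 1)}"])
       (use assms in \<open>auto simp: qrate_def split: qstate.splits\<close>)
  ultimately show ?thesis
    using global_balance[of "QB k"] assms by (simp add: algebra_simps)
qed

(* Level-crossing identity: the downward flow from level n + 1 equals the
   upward flow (la + lb) * level_mass n from level n.  Obtained by summing the
   balance equations of levels 0, ..., n. *)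
lemma level_crossing:
  "ma * \<pi> (QA (Suc n)) + mb * \<pi> (QB (Suc n)) = (la + lb) * level_mass \<pi> n"
proof (induction n rule: less_induct)
  case (less n)
  consider "n = 0" | "n = 1" | k where "n = Suc (Suc k)"
    by (metis One_nat_def not0_implies_Suc)
  then show ?case
  proof cases
    case 1
    then show ?thesis using balance_Empty by (simp add: level_mass_def)
  next
    case 2
    have "ma * \<pi> (QA 2) + mb * \<pi> (QB 2) = (la + lb) * (\<pi> (QA 1) + \<pi> (QB 1))"
      using balance_Empty balance_QA_1 balance_QB_1 by algebra
    with 2 show ?thesis by (simp add: level_mass_def numeral_2_eq_2)
  next
    case (3 k)
    have "ma * \<pi> (QA (Suc (Suc k))) + mb * \<pi> (QB (Suc (Suc k)))
          = (la + lb) * (\<pi> (QA (Suc k)) + \<pi> (QB (Suc k)))"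
      using less.IH[of "Suc k"] 3 by (simp add: level_mass_def)
    then have "ma * \<pi> (QA (Suc (Suc (Suc k)))) + mb * \<pi> (QB (Suc (Suc (Suc k))))
               = (la + lb) * (\<pi> (QA (Suc (Suc k))) + \<pi> (QB (Suc (Suc k))))"
      using balance_QA[of "Suc (Suc k)", simplified] balance_QB[of "Suc (Suc k)", simplified]
      by algebra
    with 3 show ?thesis by (simp add: level_mass_def)
  qed
qed

lemma level_recurrence:
  assumes "2 \<le> k"
  shows "(la + lb + ma) * \<pi> (QA k) = (la + lb) * \<pi> (QA (k - 1))
           + p_par la lb d k * (la + lb) * (\<pi> (QA k) + \<pi> (QB k)) + g * \<pi> (QB k)"
    and "(la + lb + mb + g) * \<pi> (QB k) = (la + lb) * \<pi> (QB (k - 1))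
           + (1 - p_par la lb d k) * (la + lb) * (\<pi> (QA k) + \<pi> (QB k))"
proof -
  have cross: "ma * \<pi> (QA (Suc k)) + mb * \<pi> (QB (Suc k)) = (la + lb) * (\<pi> (QA k) + \<pi> (QB k))"
    using level_crossing[of k] assms by (simp add: level_mass_def)
  show "(la + lb + ma) * \<pi> (QA k) = (la + lb) * \<pi> (QA (k - 1))
           + p_par la lb d k * (la + lb) * (\<pi> (QA k) + \<pi> (QB k)) + g * \<pi> (QB k)"
    using balance_QA[OF assms] by (simp add: cross mult.assoc)
  show "(la + lb + mb + g) * \<pi> (QB k) = (la + lb) * \<pi> (QB (k - 1))
           + (1 - p_par la lb d k) * (la + lb) * (\<pi> (QA k) + \<pi> (QB k))"
    using balance_QB[OF assms] by (simp add: cross mult.assoc)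
qed

lemma stationary_nonneg: "0 \<le> \<pi> s"
  using stationary by (simp add: stationary_dist_def)

lemma stationary_outside: "s \<notin> qspace \<Longrightarrow> \<pi> s = 0"
  using stationary by (simp add: stationary_dist_def)

(* The empty state has positive mass: otherwise the level-crossing identity
   forces every level to have mass 0, contradicting total mass 1. *)
lemma Empty_pos:
  assumes "0 < ma" "0 < mb"
  shows "0 < \<pi> Empty"
proof (rule ccontr)
  assume "\<not> 0 < \<pi> Empty"
  then have empty: "\<pi> Empty = 0" using stationary_nonneg[of Empty] by simp
  have levels: "level_mass \<pi> n = 0" for n
  proof (induction n)
    case 0
    then show ?case using empty by (simp add: level_mass_def)
  next
    case (Suc n)
    have "ma * \<pi> (QA (Suc n)) + mb * \<pi> (QB (Suc n)) = 0"
      using level_crossing[of n] Suc.IH by simp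
    with assms stationary_nonneg[of "QA (Suc n)"] stationary_nonneg[of "QB (Suc n)"]
    have "\<pi> (QA (Suc n)) = 0" "\<pi> (QB (Suc n)) = 0"
      by (smt (verit) mult_pos_pos mult_nonneg_nonneg)+
    then show ?case by (simp add: level_mass_def)
  qed
  have level_zero: "\<pi> (QA n) = 0 \<and> \<pi> (QB n) = 0" for n
  proof (cases "n = 0")
    case True
    then show ?thesis using stationary_outside by simp
  next
    case False
    then have "\<pi> (QA n) + \<pi> (QB n) = 0" using levels[of n] by (simp add: level_mass_def)
    with stationary_nonneg[of "QA n"] stationary_nonneg[of "QB n"] show ?thesis by linarith
  qed
  have "\<pi> s = 0" for s
    using empty level_zero by (cases s) simp_all
  then have "(\<pi> has_sum 0) qspace" by (simp add: has_sum_0)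
  moreover have "(\<pi> has_sum 1) qspace" using stationary by (simp add: stationary_dist_def)
  ultimately show False using has_sum_unique by fastforce
qed

lemma QA_pos:
  assumes "0 < la" "0 < lb" "0 \<le> d" "0 \<le> g" "0 < ma" "0 < mb"
  shows "0 < \<pi> (QA (Suc n))"
proof (induction n)
  case 0
  have "0 \<le> p_par la lb d 1 * (ma * \<pi> (QA 2) + mb * \<pi> (QB 2)) + g * \<pi> (QB 1)"
    using assms p_par_nonneg stationary_nonneg by (simp add: add_nonneg_nonneg)
  moreover have "0 < la * \<pi> Empty" using assms Empty_pos by simp
  ultimately have "0 < (la + lb + ma) * \<pi> (QA 1)"
    using balance_QA_1 by linarith
  then show ?case using assms by (simp add: zero_less_mult_iff)
next
  case (Suc n)
  have "0 \<le> p_par la lb d (Suc (Suc n)) * (la + lb) * (\<pi> (QA (Suc (Suc n))) + \<pi> (QB (Suc (Suc n))))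
           + g * \<pi> (QB (Suc (Suc n)))"
    using assms p_par_nonneg stationary_nonneg by (simp add: add_nonneg_nonneg)
  moreover have "0 < (la + lb) * \<pi> (QA (Suc n))" using assms Suc.IH by simp
  ultimately have "0 < (la + lb + ma) * \<pi> (QA (Suc (Suc n)))"
    using level_recurrence(1)[of "Suc (Suc n)"] by simp
  then show ?case using assms by (simp add: zero_less_mult_iff)
qed

end

theorem mainTheorem7:
  fixes la lb d g ma mb :: real and \<pi> :: "qstate \<Rightarrow> real"
  assumes "la > 0" "lb > 0" "d > 0" "g > 0" "ma > 0" "mb > 0"
    and "stationary_dist (qrate la lb d g ma mb) qspace \<pi>"
  defines "lam \<equiv> la + lb"
  defines "Delta \<equiv> (lam - g + ma - mb)^2 + 4 * lam * g"
  defines "eta \<equiv> (sqrt Delta + g - lam + mb - ma) / (2 * lam)"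
  shows "((\<lambda>n. \<pi> (QA n) / \<pi> (QB n)) \<longlonglongrightarrow> eta) \<and>
         ((\<lambda>n. (ma * \<pi> (QA n) + mb * \<pi> (QB n)) / (\<pi> (QA n) + \<pi> (QB n)))
           \<longlonglongrightarrow> mb + eta / (1 + eta) * (ma - mb))"
proof -
  note stat = assms(7)
  have p_lim: "(\<lambda>n. p_par la lb d (Suc n)) \<longlonglongrightarrow> 0"
    using p_par_tendsto_zero[of la lb d] assms(1-3) by (intro LIMSEQ_Suc) simp
  have "(\<lambda>n. \<pi> (QA (Suc n)) / \<pi> (QB (Suc n))) \<longlonglongrightarrow> eta \<and> 0 < eta"
    unfolding eta_def Delta_def
    by (intro conjI perturbed_recurrence_ratio_limit[where x = "\<lambda>n. \<pi> (QA (Suc n))"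
          and y = "\<lambda>n. \<pi> (QB (Suc n))" and p = "\<lambda>n. p_par la lb d (Suc n)"])
       (use assms p_lim stationary_nonneg[OF stat] QA_pos[OF stat] p_par_nonneg
          level_recurrence[OF stat, of "Suc (Suc _)"] in \<open>simp_all add: lam_def\<close>)
  then show ?thesis
    using weighted_average_limit[of "\<lambda>n. \<pi> (QA n)" "\<lambda>n. \<pi> (QB n)" eta ma mb]
    by (auto intro: LIMSEQ_imp_Suc)
qed

end
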